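(* For every $b\in\mathbb F_{3^{2m}}$, the vector $(\mathrm{Tr}_{2m}(bt))_{t\in\mathbb F_{3^{2m}}}$ belongs to $\mathcal C_3(\mathbb D_d)$.
   Context: Let $m\ge 2$ be an integer. For $s\in\{m,2m\}$ let $\mathrm{Tr}_s:\mathbb F_{3^s}\to\mathbb F_3$ denote the absolute trace. Vectors in $\mathbb F_3^{3^{2m}}$ are indexed by $\mathbb F_{3^{2m}}$, and a function $f:\mathbb F_{3^{2m}}\to\mathbb F_3$ is identified with $(f(t))_{t\in\mathbb F_{3^{2m}}}$. Let $\mathcal C(2m,3)=\{(\mathrm{Tr}_{2m}(at^{3^m+1}+bt)+h)_{t\in\mathbb F_{3^{2m}}}: a\in\mathbb F_{3^m}, b\in\mathbb F_{3^{2m}}, h\in\mathbb F_3\}$, let $d$ be its minimum nonzero Hamming weight, let $\mathbb D_d$ be the incidence structure on $\mathbb F_{3^{2m}}$ whose blocks are the supports of the weight-$d$ codewords, and let $\mathcal C_3(\mathbb D_d)$ be the $\mathbb F_3$-span of the incidence vectors of the blocks (entry $1$ on the block, $0$ elsewhere). *)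

theory Defs
  imports Main
begin

text \<open>The field F_{3^{2m}} is modelled as a finite field type 'a with CARD('a) = 3^(2m).
  Vectors in F_3^{3^{2m}} indexed by F_{3^{2m}} are functions 'a => 'a with values in F_3.\<close>

definition F3 :: "'a::field set" where
  "F3 = {0, 1, 2}"

definition subfield_m :: "nat \<Rightarrow> 'a::field set" where
  "subfield_m m = {x. x ^ (3 ^ m) = x}"

definition Tr :: "nat \<Rightarrow> 'a::field \<Rightarrow> 'a" where
  "Tr s x = (\<Sum>i<s. x ^ (3 ^ i))"

definition code_C :: "nat \<Rightarrow> ('a::{field,finite} \<Rightarrow> 'a) set" where
  "code_C m = {(\<lambda>t. Tr (2*m) (a * t ^ (3 ^ m + 1) + b * t) + h) | a b h.
                 a \<in> subfield_m m \<and> h \<in> F3}"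

definition hweight :: "('a::finite \<Rightarrow> 'b::zero) \<Rightarrow> nat" where
  "hweight c = card {t. c t \<noteq> 0}"

definition min_weight :: "('a::finite \<Rightarrow> 'b::zero) set \<Rightarrow> nat" where
  "min_weight C = Min {hweight c | c. c \<in> C \<and> c \<noteq> (\<lambda>_. 0)}"

definition supp :: "('a \<Rightarrow> 'b::zero) \<Rightarrow> 'a set" where
  "supp c = {t. c t \<noteq> 0}"

definition blocks_D :: "('a::finite \<Rightarrow> 'b::zero) set \<Rightarrow> nat \<Rightarrow> 'a set set" where
  "blocks_D C d = {supp c | c. c \<in> C \<and> hweight c = d}"

definition incidence_vec :: "'a set \<Rightarrow> 'a \<Rightarrow> 'b::{zero,one}" where
  "incidence_vec B = (\<lambda>t. if t \<in> B then 1 else 0)"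

text \<open>F_3-span of the incidence vectors of the blocks (all blocks are subsets of the finite
  type, so there are finitely many of them).\<close>
definition code_of_design :: "'a::finite set set \<Rightarrow> ('a \<Rightarrow> 'b::field) set" where
  "code_of_design Bs = {(\<lambda>t. \<Sum>B\<in>Bs. coef B * incidence_vec B t) | coef.
                          \<forall>B\<in>Bs. coef B \<in> F3}"

end

theory Submission
  imports Defs "HOL-Computational_Algebra.Polynomial" "HOL-Computational_Algebra.Primes"
begin

(*
  Let V be the F_3-span of the blocks. Codewords take values in F_3, so the incidence vector of
  the support of a codeword c is the pointwise square c^2; and the code is invariant under the
  weight-preserving affine maps t \<mapsto> \<mu> t + x. Hence V contains the squares of all affine
  transforms of a single minimum-weight codeword c, which is not constant because Tr(t) has
  weight less than 3^(2m).

  If c = Tr(b t) + h, the identity (u + 1)^2 + 2 (u + 2)^2 = u of characteristic 3 recovers the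
  linear functional from two shifts. Otherwise, after completing the square, c = Q + h for the
  Hermitian form Q(x) = Tr(a x^(q+1)), q = 3^m, with polar form B(x, s) = Tr(a x^q s). The shifts
  by x and -x give the difference of squares D(x) = 2 B(x, s) (Q(s) + Q(x) + h). In
  D(x_1) + D(x_2) - D(x_1 + x_2) the terms in Q(s) and h cancel, leaving the linear functional
  2 B(y, s) with y = Q(x_1) x_1 + Q(x_2) x_2 - Q(x_1 + x_2) (x_1 + x_2), and y is nonzero for a
  suitable choice of x_1, x_2. Rescaling s = \<mu> t reaches every Tr(b t).
*)

lemma field_power_card_eq_self:
  fixes x :: "'a::{field,finite}"
  shows "x ^ card (UNIV :: 'a set) = x"
proof (cases "x = 0")
  case False
  have "x ^ card (UNIV - {0::'a}) * (\<Prod>y\<in>UNIV - {0}. y) = (\<Prod>y\<in>UNIV - {0::'a}. x * y)"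
    by (simp add: prod.distrib)
  also have "\<dots> = (\<Prod>y\<in>UNIV - {0::'a}. y)"
    by (rule prod.reindex_bij_witness[of _ "\<lambda>y. y / x" "\<lambda>y. x * y"]) (use False in auto)
  finally have "x ^ (card (UNIV :: 'a set) - 1) = 1"
    by (simp add: card_Diff_singleton)
  then have "x ^ Suc (card (UNIV :: 'a set) - 1) = x"
    by simp
  then show ?thesis
    using finite_UNIV_card_ge_0[where ?'a = 'a] by simp
qed (simp add: finite_UNIV_card_ge_0)

lemma of_nat_card_UNIV_eq_0: "of_nat (card (UNIV :: 'a::{ring_1,finite} set)) = (0::'a)"
proof -
  have "(\<Sum>y\<in>(UNIV::'a set). y + 1) = (\<Sum>y\<in>UNIV. y)"
    by (rule sum.reindex_bij_witness[of _ "\<lambda>y. y - 1" "\<lambda>y. y + 1"]) auto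
  then show ?thesis
    by (simp add: sum.distrib)
qed

lemma Tr_zero [simp]: "Tr n 0 = 0"
  by (simp add: Tr_def power_0_left)

lemma hweight_affine:
  fixes c :: "'a::{field,finite} \<Rightarrow> 'b::zero"
  assumes "\<mu> \<noteq> 0"
  shows "hweight (\<lambda>t. c (\<mu> * t + x)) = hweight c"
proof -
  have "bij_betw (\<lambda>t. \<mu> * t + x) {t. c (\<mu> * t + x) \<noteq> 0} {s. c s \<noteq> 0}"
    by (rule bij_betw_byWitness[where f' = "\<lambda>s. (s - x) / \<mu>"]) (use assms in auto)
  then show ?thesis
    unfolding hweight_def by (rule bij_betw_same_card)
qed

lemma min_weight_le:
  fixes C :: "('a::finite \<Rightarrow> 'b::zero) set"
  assumes "c \<in> C" and "c \<noteq> (\<lambda>_. 0)"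
  shows "min_weight C \<le> hweight c"
proof -
  have "{hweight c | c. c \<in> C \<and> c \<noteq> (\<lambda>_. 0)} \<subseteq> {..card (UNIV :: 'a set)}"
    unfolding hweight_def by (auto intro!: card_mono)
  then show ?thesis
    unfolding min_weight_def using assms by (intro Min_le) (auto intro: finite_subset)
qed

lemma min_weight_attained:
  fixes C :: "('a::finite \<Rightarrow> 'b::zero) set"
  assumes "c \<in> C" and "c \<noteq> (\<lambda>_. 0)"
  obtains c0 where "c0 \<in> C" "c0 \<noteq> (\<lambda>_. 0)" "hweight c0 = min_weight C"
proof -
  have "{hweight c | c. c \<in> C \<and> c \<noteq> (\<lambda>_. 0)} \<subseteq> {..card (UNIV :: 'a set)}"
    unfolding hweight_def by (auto intro!: card_mono)
  then have "min_weight C \<in> {hweight c | c. c \<in> C \<and> c \<noteq> (\<lambda>_. 0)}"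
    unfolding min_weight_def using assms by (intro Min_in) (auto intro: finite_subset)
  then show ?thesis
    using that by auto
qed

context
  assumes CHAR_3: "CHAR('a::field) = 3"
begin

lemma three_eq_zero: "(3::'a) = 0"
  by (metis CHAR_3 of_nat_CHAR of_nat_numeral)

lemma two_eq_minus_one: "(2::'a) = - 1"
  by (metis three_eq_zero add_eq_0_iff2 numeral_plus_one semiring_norm(5) eq_neg_iff_add_eq_0)

lemma two_neq_zero: "(2::'a) \<noteq> 0"
  by (metis two_eq_minus_one neg_equal_0_iff_equal one_neq_zero)

lemma frobenius_add: "((x::'a) + y) ^ 3 ^ i = x ^ 3 ^ i + y ^ 3 ^ i"
  by (rule freshmans_dream') (simp_all add: CHAR_3)

lemma frobenius_minus: "(- (x::'a)) ^ 3 ^ i = - (x ^ 3 ^ i)"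
  by (rule power_minus_odd) simp

lemma frobenius_diff: "((x::'a) - y) ^ 3 ^ i = x ^ 3 ^ i - y ^ 3 ^ i"
  using frobenius_add[of x "- y" i] by (simp add: frobenius_minus)

lemma sum_power_three: "(\<Sum>i\<in>A. f i :: 'a) ^ 3 = (\<Sum>i\<in>A. f i ^ 3)"
  by (rule freshmans_dream_sum) (simp_all add: CHAR_3)

lemma F3_iff_cube: "(y::'a) \<in> F3 \<longleftrightarrow> y ^ 3 = y"
proof
  assume "y \<in> F3"
  moreover have "(2::'a) ^ 3 = 2 + 2 * 3"
    by simp
  ultimately show "y ^ 3 = y"
    by (auto simp: F3_def three_eq_zero)
next
  assume "y ^ 3 = y"
  moreover have "y * (y - 1) * (y - 2) = y ^ 3 - y - 3 * (y * y - y)"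
    by (simp add: power3_eq_cube algebra_simps)
  ultimately show "y \<in> F3"
    by (auto simp: F3_def three_eq_zero)
qed

lemma F3_add: "(x::'a) \<in> F3 \<Longrightarrow> y \<in> F3 \<Longrightarrow> x + y \<in> F3"
  by (simp add: F3_iff_cube frobenius_add[of x y 1, simplified])

lemma F3_mult: "(x::'a) \<in> F3 \<Longrightarrow> y \<in> F3 \<Longrightarrow> x * y \<in> F3"
  by (simp add: F3_iff_cube power_mult_distrib)

lemma F3_uminus: "(x::'a) \<in> F3 \<Longrightarrow> - x \<in> F3"
  by (simp add: F3_iff_cube)

lemma F3_diff: "(x::'a) \<in> F3 \<Longrightarrow> y \<in> F3 \<Longrightarrow> x - y \<in> F3"
  using F3_add[OF _ F3_uminus] by simp

lemma F3_power_frobenius: "(r::'a) \<in> F3 \<Longrightarrow> r ^ 3 ^ i = r"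
proof (induction i)
  case (Suc i)
  then show ?case
    by (simp add: power_mult F3_iff_cube)
qed simp

lemma F3_square_eq_one: "(w::'a) \<in> F3 \<Longrightarrow> w \<noteq> 0 \<Longrightarrow> w * w = 1"
proof -
  have "(4::'a) = 1 + 3"
    by simp
  then show "w \<in> F3 \<Longrightarrow> w \<noteq> 0 \<Longrightarrow> w * w = 1"
    by (auto simp: F3_def three_eq_zero)
qed

lemma Tr_add: "Tr n ((x::'a) + y) = Tr n x + Tr n y"
  by (simp add: Tr_def frobenius_add sum.distrib)

lemma Tr_uminus: "Tr n (- (x::'a)) = - Tr n x"
  by (simp add: Tr_def frobenius_minus sum_negf)

lemma Tr_diff: "Tr n ((x::'a) - y) = Tr n x - Tr n y"
  by (simp add: Tr_def frobenius_diff sum_subtractf)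

lemma Tr_mult_F3: "(r::'a) \<in> F3 \<Longrightarrow> Tr n (r * x) = r * Tr n x"
  by (simp add: Tr_def power_mult_distrib F3_power_frobenius sum_distrib_left)

lemma Tr_power_three:
  assumes "(x::'a) ^ 3 ^ n = x"
  shows "Tr n (x ^ 3) = Tr n x"
proof -
  have "x + Tr n (x ^ 3) = Tr n x + x ^ 3 ^ n"
    using sum.lessThan_Suc_shift[of "\<lambda>i. x ^ 3 ^ i" n] sum.lessThan_Suc[of "\<lambda>i. x ^ 3 ^ i" n]
    by (simp add: Tr_def mult.commute flip: power_mult)
  with assms show ?thesis
    by simp
qed

lemma Tr_power_frobenius:
  assumes "(x::'a) ^ 3 ^ n = x"
  shows "Tr n (x ^ 3 ^ j) = Tr n x"
proof (induction j)
  case (Suc j)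
  have "(x ^ 3 ^ j) ^ 3 ^ n = x ^ 3 ^ j"
    using assms by (metis power_mult mult.commute)
  moreover have "x ^ 3 ^ Suc j = (x ^ 3 ^ j) ^ 3"
    by (simp add: mult.commute flip: power_mult)
  ultimately show ?case
    using Suc Tr_power_three by simp
qed simp

lemma Tr_in_F3:
  assumes "(x::'a) ^ 3 ^ n = x"
  shows "Tr n x \<in> F3"
proof -
  have "Tr n x ^ 3 = Tr n (x ^ 3)"
    by (simp add: Tr_def sum_power_three mult.commute flip: power_mult)
  then show ?thesis
    using assms by (simp add: F3_iff_cube Tr_power_three)
qed

lemma code_of_design_zero: "(\<lambda>_. 0 :: 'a) \<in> code_of_design Bs"
  unfolding code_of_design_def by (intro CollectI exI[of _ "\<lambda>_. 0"]) (auto simp: F3_def)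

lemma code_of_design_add:
  assumes "f \<in> code_of_design Bs" and "g \<in> code_of_design Bs"
  shows "(\<lambda>t. f t + g t :: 'a) \<in> code_of_design Bs"
proof -
  obtain cf cg where "\<forall>B\<in>Bs. cf B \<in> F3" "\<forall>B\<in>Bs. cg B \<in> F3"
    and "f = (\<lambda>t. \<Sum>B\<in>Bs. cf B * incidence_vec B t)" "g = (\<lambda>t. \<Sum>B\<in>Bs. cg B * incidence_vec B t)"
    using assms unfolding code_of_design_def by blast
  then show ?thesis
    unfolding code_of_design_def
    by (intro CollectI exI[of _ "\<lambda>B. cf B + cg B"]) (auto simp: sum.distrib algebra_simps F3_add)
qed

lemma code_of_design_mult_F3:
  assumes "r \<in> F3" and "f \<in> code_of_design Bs"
  shows "(\<lambda>t. r * f t :: 'a) \<in> code_of_design Bs"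
proof -
  obtain cf where "\<forall>B\<in>Bs. cf B \<in> F3" and "f = (\<lambda>t. \<Sum>B\<in>Bs. cf B * incidence_vec B t)"
    using assms unfolding code_of_design_def by blast
  then show ?thesis
    unfolding code_of_design_def using assms(1)
    by (intro CollectI exI[of _ "\<lambda>B. r * cf B"]) (auto simp: sum_distrib_left algebra_simps F3_mult)
qed

lemma code_of_design_diff:
  assumes "f \<in> code_of_design Bs" and "g \<in> code_of_design Bs"
  shows "(\<lambda>t. f t - g t :: 'a) \<in> code_of_design Bs"
proof -
  have "(\<lambda>t. f t + 2 * g t) \<in> code_of_design Bs"
    using assms by (intro code_of_design_add code_of_design_mult_F3) (auto simp: F3_def)
  then show ?thesis
    by (simp add: two_eq_minus_one)
qed

lemma incidence_vec_in_code_of_design: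
  assumes "B \<in> Bs"
  shows "(incidence_vec B :: 'b::finite \<Rightarrow> 'a) \<in> code_of_design Bs"
proof -
  have "(\<Sum>B'\<in>Bs. of_bool (B' = B) * (incidence_vec B' t :: 'a)) = incidence_vec B t" for t
    using assms finite[of Bs] by simp
  then show ?thesis
    unfolding code_of_design_def F3_def
    by (intro CollectI exI[of _ "\<lambda>B'. of_bool (B' = B)"]) simp
qed

lemma incidence_vec_supp_eq_square:
  assumes "\<And>t. (c t :: 'a) \<in> F3"
  shows "incidence_vec (supp c) = (\<lambda>t. c t ^ 2)"
  using F3_square_eq_one[OF assms] by (auto simp: incidence_vec_def supp_def power2_eq_square)

lemma frobenius_inj: "(x::'a) ^ 3 ^ j = y ^ 3 ^ j \<Longrightarrow> x = y"
  using frobenius_diff[of x y j] by simp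

lemma not_F3_multiple_imp_coeff_eq_0:
  assumes "x2 \<notin> (\<lambda>r. r * x1) ` F3" and "\<alpha> \<in> F3" "\<beta> \<in> F3" and "\<alpha> * x1 + \<beta> * (x2::'a) = 0"
  shows "\<beta> = 0"
proof (rule ccontr)
  assume "\<beta> \<noteq> 0"
  then have "x2 = \<beta> * (\<alpha> * x1 + \<beta> * x2) - (\<alpha> * \<beta>) * x1"
    using F3_square_eq_one[OF assms(3)] by (simp add: algebra_simps)
  then have "x2 = (- (\<alpha> * \<beta>)) * x1"
    using assms(4) by simp
  moreover have "- (\<alpha> * \<beta>) \<in> F3"
    using assms(2,3) by (intro F3_uminus F3_mult)
  ultimately show False
    using assms(1) by (metis image_eqI)
qed

lemma square_shift_combination: "((u::'a) + 1) ^ 2 + 2 * (u + 2) ^ 2 = u"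
proof -
  have "(u + 1) ^ 2 + 2 * (u + 2) ^ 2 = u + 3 * (u * u + 3 * u + 3)"
    by (simp add: power2_eq_square algebra_simps)
  then show ?thesis
    by (simp add: three_eq_zero)
qed

lemma square_diff_shift: "((A::'a) + 2 * P) ^ 2 - (A - 2 * P) ^ 2 = 2 * P * A"
proof -
  have "(A + 2 * P) ^ 2 - (A - 2 * P) ^ 2 = 2 * P * A + 3 * (2 * P * A)"
    by (simp add: power2_eq_square algebra_simps)
  then show ?thesis
    by (simp add: three_eq_zero)
qed

end

context
  fixes n :: nat
  assumes card_eq: "card (UNIV :: 'a::{field,finite} set) = 3 ^ n"
begin

lemma CHAR_eq_3: "CHAR('a) = 3"
proof -
  have "prime CHAR('a)"
    by (intro prime_CHAR_semidom finite_imp_CHAR_pos) simp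
  moreover have "CHAR('a) dvd 3 ^ n"
    using of_nat_card_UNIV_eq_0[where ?'a = 'a] unfolding card_eq of_nat_eq_0_iff_char_dvd .
  moreover have "prime (3::nat)"
  proof -
    have "{2..<3} = {2::nat}"
      by auto
    then show ?thesis
      by (simp add: prime_nat_iff')
  qed
  ultimately show ?thesis
    by (metis prime_dvd_power primes_dvd_imp_eq)
qed

lemma exponent_pos: "n > 0"
proof -
  have "card {0, 1 :: 'a} \<le> card (UNIV :: 'a set)"
    by (rule card_mono) simp_all
  then show ?thesis
    using card_eq by (cases n) auto
qed

lemma power_card_eq_self: "(x::'a) ^ 3 ^ n = x"
  using field_power_card_eq_self[of x] by (simp add: card_eq)

lemma Tr_nonzero: "\<exists>y::'a. Tr n y \<noteq> 0"
proof (rule ccontr)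
  assume "\<not> ?thesis"
  then have roots: "\<And>y::'a. Tr n y = 0"
    by blast
  define p :: "'a poly" where "p = (\<Sum>i<n. monom 1 (3 ^ i))"
  have poly_p: "poly p y = Tr n y" for y
    by (simp add: p_def poly_sum poly_monom Tr_def)
  have "coeff p (3 ^ (n - 1)) = (\<Sum>i<n. if i = n - 1 then 1 else 0)"
    unfolding p_def coeff_sum coeff_monom by (intro sum.cong) auto
  also have "\<dots> = 1"
    using exponent_pos by simp
  finally have "p \<noteq> 0"
    by auto
  then have "card {y. poly p y = 0} \<le> degree p"
    by (rule card_poly_roots_bound)
  also have "degree p \<le> 3 ^ (n - 1)"
    unfolding p_def
  proof (rule degree_sum_le)
    fix i assume "i \<in> {..<n}"
    then have "(3::nat) ^ i \<le> 3 ^ (n - 1)"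
      by (intro power_increasing) auto
    then show "degree (monom (1::'a) (3 ^ i)) \<le> 3 ^ (n - 1)"
      using degree_monom_le[of "1::'a" "3 ^ i"] by linarith
  qed simp
  also have "(3::nat) ^ (n - 1) < 3 ^ n"
    using exponent_pos by (intro power_strict_increasing) auto
  finally show False
    using poly_p roots card_eq by simp
qed

lemma Tr_mult_eq_0_imp_eq_0:
  assumes "\<And>t::'a. Tr n (x * t) = 0"
  shows "x = 0"
proof (rule ccontr)
  assume "x \<noteq> 0"
  obtain y :: 'a where "Tr n y \<noteq> 0"
    using Tr_nonzero by blast
  moreover have "Tr n (x * (y / x)) = 0"
    by (rule assms)
  ultimately show False
    using \<open>x \<noteq> 0\<close> by simp
qed

lemma Tr_mult_surj_F3:
  assumes "b \<noteq> 0" and "v \<in> F3"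
  obtains x :: 'a where "Tr n (b * x) = v"
proof -
  obtain y :: 'a where y: "Tr n y \<noteq> 0"
    using Tr_nonzero by blast
  have F3_Tr: "Tr n y \<in> F3"
    by (rule Tr_in_F3[OF CHAR_eq_3 power_card_eq_self])
  have "Tr n (b * (v * Tr n y * y / b)) = v * Tr n y * Tr n y"
    using assms F3_Tr by (simp add: Tr_mult_F3[OF CHAR_eq_3] F3_mult[OF CHAR_eq_3])
  also have "\<dots> = v"
    using F3_square_eq_one[OF CHAR_eq_3 F3_Tr y] by (simp add: mult.assoc)
  finally show ?thesis
    by (rule that)
qed

lemma frobenius_surj: "\<exists>e::'a. e ^ 3 ^ j = z"
proof -
  have "inj (\<lambda>e::'a. e ^ 3 ^ j)"
    by (auto intro: injI frobenius_inj[OF CHAR_eq_3])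
  then have "surj (\<lambda>e::'a. e ^ 3 ^ j)"
    by (simp add: finite_UNIV_inj_surj)
  then show ?thesis
    by (metis surjD)
qed

lemma Tr_mult_in_design_of_linear_squares:
  assumes "b \<noteq> 0" and "h \<in> F3"
    and squares: "\<And>\<mu> x. \<mu> \<noteq> 0 \<Longrightarrow> (\<lambda>t. (Tr n (b * (\<mu> * t + x)) + h) ^ 2) \<in> code_of_design Bs"
    and "c \<noteq> 0"
  shows "(\<lambda>t::'a. Tr n (c * t)) \<in> code_of_design Bs"
proof -
  define \<mu> where "\<mu> = c / b"
  have "\<mu> \<noteq> 0"
    using assms by (simp add: \<mu>_def)
  have "1 - h \<in> F3" "2 - h \<in> F3"
    by (rule F3_diff[OF CHAR_eq_3 _ \<open>h \<in> F3\<close>]; simp add: F3_def)+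
  then obtain x1 x2 where x1: "Tr n (b * x1) = 1 - h" and x2: "Tr n (b * x2) = 2 - h"
    using Tr_mult_surj_F3[OF \<open>b \<noteq> 0\<close>] by metis
  have shift: "Tr n (b * (\<mu> * t + x)) + h = Tr n (c * t) + (Tr n (b * x) + h)" for t x
    using assms by (simp add: \<mu>_def Tr_add[OF CHAR_eq_3] distrib_left)
  have "(\<lambda>t. (Tr n (b * (\<mu> * t + x1)) + h) ^ 2 + 2 * (Tr n (b * (\<mu> * t + x2)) + h) ^ 2)
      \<in> code_of_design Bs"
    using \<open>\<mu> \<noteq> 0\<close>
    by (intro code_of_design_add[OF CHAR_eq_3] code_of_design_mult_F3[OF CHAR_eq_3] squares)
      (simp_all add: F3_def)
  then show ?thesis
    by (simp add: shift x1 x2 square_shift_combination[OF CHAR_eq_3])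
qed

context
  fixes m :: nat
  assumes n_eq: "n = 2 * m"
begin

definition quad_form :: "'a \<Rightarrow> 'a \<Rightarrow> 'a" where
  "quad_form a x = Tr n (a * x ^ (3 ^ m + 1))"

definition polar_form :: "'a \<Rightarrow> 'a \<Rightarrow> 'a \<Rightarrow> 'a" where
  "polar_form a x y = Tr n (a * x ^ 3 ^ m * y)"

lemma frobenius_m_twice: "((x::'a) ^ 3 ^ m) ^ 3 ^ m = x"
proof -
  have "(x ^ 3 ^ m) ^ 3 ^ m = x ^ 3 ^ n"
    by (simp add: n_eq mult_2 power_add flip: power_mult)
  then show ?thesis
    by (simp add: power_card_eq_self)
qed

lemma polar_form_sym:
  assumes "a ^ 3 ^ m = a"
  shows "polar_form a x y = polar_form a y x"
proof -
  have "(a * y ^ 3 ^ m * x) ^ 3 ^ m = a * x ^ 3 ^ m * y"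
    using assms by (simp add: power_mult_distrib frobenius_m_twice mult_ac)
  then show ?thesis
    unfolding polar_form_def
    by (metis Tr_power_frobenius[OF CHAR_eq_3 power_card_eq_self])
qed

lemma quad_form_add:
  assumes "a ^ 3 ^ m = a"
  shows "quad_form a (s + x) = quad_form a s + 2 * polar_form a x s + quad_form a x"
proof -
  have "a * (s + x) ^ (3 ^ m + 1)
      = a * s ^ (3 ^ m + 1) + a * x ^ 3 ^ m * s + a * s ^ 3 ^ m * x + a * x ^ (3 ^ m + 1)"
    by (simp add: frobenius_add[OF CHAR_eq_3] algebra_simps)
  then have "quad_form a (s + x) = quad_form a s + polar_form a x s + polar_form a s x + quad_form a x"
    by (simp add: quad_form_def polar_form_def Tr_add[OF CHAR_eq_3])
  then show ?thesis
    using polar_form_sym[OF assms, of s x] by simp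
qed

lemma quad_form_uminus: "quad_form a (- x) = quad_form a x"
  by (simp add: quad_form_def frobenius_minus)

lemma polar_form_add_left: "polar_form a (x + y) s = polar_form a x s + polar_form a y s"
  by (simp add: polar_form_def frobenius_add[OF CHAR_eq_3] algebra_simps Tr_add[OF CHAR_eq_3])

lemma polar_form_uminus_left: "polar_form a (- x) s = - polar_form a x s"
  by (simp add: polar_form_def frobenius_minus Tr_uminus[OF CHAR_eq_3, symmetric])

lemma polar_form_diff_left: "polar_form a (x - y) s = polar_form a x s - polar_form a y s"
  by (simp add: polar_form_def frobenius_diff[OF CHAR_eq_3] algebra_simps Tr_diff[OF CHAR_eq_3])

lemma polar_form_mult_left:
  assumes "r \<in> F3"
  shows "polar_form a (r * x) s = r * polar_form a x s"
  using assms
  by (simp add: polar_form_def power_mult_distrib F3_power_frobenius[OF CHAR_eq_3] mult_ac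
      flip: Tr_mult_F3[OF CHAR_eq_3])

lemma quad_form_in_F3: "quad_form a x \<in> F3"
  unfolding quad_form_def by (rule Tr_in_F3[OF CHAR_eq_3 power_card_eq_self])

lemma polar_form_in_F3: "polar_form a x y \<in> F3"
  unfolding polar_form_def by (rule Tr_in_F3[OF CHAR_eq_3 power_card_eq_self])

lemma quad_form_shift_square_diff:
  assumes "a ^ 3 ^ m = a"
  shows "(quad_form a (s + x) + h) ^ 2 - (quad_form a (s - x) + h) ^ 2
    = 2 * polar_form a x s * (quad_form a s + quad_form a x + h)"
proof -
  let ?A = "quad_form a s + quad_form a x + h" and ?P = "polar_form a x s"
  have plus: "quad_form a (s + x) + h = ?A + 2 * ?P"
    using quad_form_add[OF assms, of s x] by simp
  have minus: "quad_form a (s - x) + h = ?A - 2 * ?P"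
    using quad_form_add[OF assms, of s "- x"] by (simp add: quad_form_uminus polar_form_uminus_left)
  show ?thesis
    unfolding plus minus by (rule square_diff_shift[OF CHAR_eq_3])
qed

definition quad_form_defect :: "'a \<Rightarrow> 'a \<Rightarrow> 'a \<Rightarrow> 'a" where
  "quad_form_defect a x1 x2 =
    quad_form a x1 * x1 + quad_form a x2 * x2 - quad_form a (x1 + x2) * (x1 + x2)"

lemma quad_form_three_shifts:
  assumes "a ^ 3 ^ m = a"
  shows "(quad_form a (s + x1) + h) ^ 2 - (quad_form a (s - x1) + h) ^ 2
      + ((quad_form a (s + x2) + h) ^ 2 - (quad_form a (s - x2) + h) ^ 2)
      - ((quad_form a (s + (x1 + x2)) + h) ^ 2 - (quad_form a (s - (x1 + x2)) + h) ^ 2)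
    = 2 * polar_form a (quad_form_defect a x1 x2) s"
proof -
  let ?Q = "quad_form a" and ?P = "\<lambda>x. polar_form a x s"
  have defect: "polar_form a (quad_form_defect a x1 x2) s
      = ?Q x1 * ?P x1 + ?Q x2 * ?P x2 - ?Q (x1 + x2) * (?P x1 + ?P x2)"
    by (simp only: quad_form_defect_def polar_form_diff_left polar_form_add_left
        polar_form_mult_left[OF quad_form_in_F3])
  show ?thesis
    unfolding quad_form_shift_square_diff[OF assms] polar_form_add_left defect by algebra
qed

lemma quad_form_nonzero:
  assumes "a \<noteq> 0" and "a ^ 3 ^ m = a"
  obtains x where "quad_form a x \<noteq> 0"
proof -
  have "\<exists>x. quad_form a x \<noteq> 0"
  proof (rule ccontr)
    assume "\<not> ?thesis"
    then have "2 * polar_form a 1 t = 0" for t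
      using quad_form_add[OF assms(2), of t 1] by simp
    then have "Tr n (a * t) = 0" for t
      using two_neq_zero[OF CHAR_eq_3] by (simp add: polar_form_def)
    then show False
      using assms(1) Tr_mult_eq_0_imp_eq_0 by blast
  qed
  then show ?thesis
    using that by blast
qed

lemma exists_not_F3_multiple: "\<exists>y::'a. y \<notin> (\<lambda>r. r * x) ` F3"
proof -
  have "card ((\<lambda>r. r * x) ` F3) \<le> 3"
    using card_image_le[of F3 "\<lambda>r. r * x"] card_length[of "[0, 1, 2 :: 'a]"] by (simp add: F3_def)
  moreover have "(3::nat) ^ 1 < 3 ^ n"
    using exponent_pos n_eq by (intro power_strict_increasing) auto
  ultimately have "(\<lambda>r. r * x) ` F3 \<noteq> UNIV"
    using card_eq by auto
  then show ?thesis
    by blast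
qed

lemma quad_form_defect_expand:
  assumes "a ^ 3 ^ m = a"
  shows "quad_form_defect a x1 x2 = - (quad_form a x2 + 2 * polar_form a x2 x1) * x1
    + - (quad_form a x1 + 2 * polar_form a x2 x1) * x2"
  by (simp add: quad_form_defect_def quad_form_add[OF assms] algebra_simps)

lemma quad_form_defect_nonzero:
  assumes "a \<noteq> 0" and "a ^ 3 ^ m = a"
  obtains x1 x2 where "quad_form_defect a x1 x2 \<noteq> 0"
proof -
  obtain x1 where "quad_form a x1 \<noteq> 0"
    using quad_form_nonzero[OF assms] .
  obtain x2 where x2: "x2 \<notin> (\<lambda>r. r * x1) ` F3"
    using exists_not_F3_multiple by blast
  have "- x2 \<notin> (\<lambda>r. r * x1) ` F3"
  proof
    assume "- x2 \<in> (\<lambda>r. r * x1) ` F3"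
    then obtain r where "r \<in> F3" and "x2 = (- r) * x1"
      by (auto simp: minus_equation_iff[of x2])
    then show False
      using x2 F3_uminus[OF CHAR_eq_3] by blast
  qed
  have coeff: "quad_form a x1 + 2 * polar_form a y x1 = 0"
    if "y \<notin> (\<lambda>r. r * x1) ` F3" and "quad_form_defect a x1 y = 0" for y
  proof -
    let ?\<alpha> = "- (quad_form a y + 2 * polar_form a y x1)"
      and ?\<beta> = "- (quad_form a x1 + 2 * polar_form a y x1)"
    have "?\<alpha> \<in> F3" "?\<beta> \<in> F3"
      by (intro F3_uminus[OF CHAR_eq_3] F3_add[OF CHAR_eq_3] F3_mult[OF CHAR_eq_3]
          quad_form_in_F3 polar_form_in_F3; simp add: F3_def)+
    moreover have "?\<alpha> * x1 + ?\<beta> * y = 0"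
      using that(2) unfolding quad_form_defect_expand[OF assms(2)] .
    ultimately have "?\<beta> = 0"
      by (rule not_F3_multiple_imp_coeff_eq_0[OF CHAR_eq_3 that(1)])
    then show ?thesis
      by (simp only: neg_equal_0_iff_equal)
  qed
  \<comment> \<open>the \<open>x\<^sub>2\<close>-coefficients of the defects for \<open>x\<^sub>2\<close> and \<open>-x\<^sub>2\<close> add up to \<open>2 Q(x\<^sub>1) \<noteq> 0\<close>\<close>
  show ?thesis
  proof (cases "quad_form_defect a x1 x2 = 0 \<and> quad_form_defect a x1 (- x2) = 0")
    case True
    then have "quad_form a x1 + 2 * polar_form a x2 x1 = 0"
      and "quad_form a x1 - 2 * polar_form a x2 x1 = 0"
      using coeff[OF x2] coeff[OF \<open>- x2 \<notin> _\<close>] by (simp_all add: polar_form_uminus_left)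
    then have "2 * quad_form a x1 = 0"
      by (simp add: algebra_simps)
    then show ?thesis
      using \<open>quad_form a x1 \<noteq> 0\<close> two_neq_zero[OF CHAR_eq_3] by simp
  next
    case False
    then show ?thesis
      using that by blast
  qed
qed

lemma Tr_mult_in_design_of_quadratic_squares:
  assumes "a \<noteq> 0" and "a ^ 3 ^ m = a"
    and squares: "\<And>\<mu> x. \<mu> \<noteq> 0 \<Longrightarrow> (\<lambda>t. (quad_form a (\<mu> * t + x) + h) ^ 2) \<in> code_of_design Bs"
    and "c \<noteq> 0"
  shows "(\<lambda>t. Tr n (c * t)) \<in> code_of_design Bs"
proof -
  obtain x1 x2 where "quad_form_defect a x1 x2 \<noteq> 0"
    using quad_form_defect_nonzero[OF assms(1,2)] .
  define y where "y = quad_form_defect a x1 x2"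
  define \<mu> where "\<mu> = c / (2 * a * y ^ 3 ^ m)"
  have "2 * a * y ^ 3 ^ m \<noteq> 0"
    using assms(1) \<open>quad_form_defect a x1 x2 \<noteq> 0\<close> two_neq_zero[OF CHAR_eq_3]
    by (simp add: y_def)
  then have "\<mu> \<noteq> 0" and scale: "2 * (a * y ^ 3 ^ m * (\<mu> * t)) = c * t" for t
    using \<open>c \<noteq> 0\<close> by (simp_all add: \<mu>_def)
  have pair: "(\<lambda>t. (quad_form a (\<mu> * t + x) + h) ^ 2 - (quad_form a (\<mu> * t - x) + h) ^ 2)
      \<in> code_of_design Bs" for x
    using code_of_design_diff[OF CHAR_eq_3 squares[OF \<open>\<mu> \<noteq> 0\<close>, of x] squares[OF \<open>\<mu> \<noteq> 0\<close>, of "- x"]]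
    by simp
  have "(\<lambda>t. (quad_form a (\<mu> * t + x1) + h) ^ 2 - (quad_form a (\<mu> * t - x1) + h) ^ 2
      + ((quad_form a (\<mu> * t + x2) + h) ^ 2 - (quad_form a (\<mu> * t - x2) + h) ^ 2)
      - ((quad_form a (\<mu> * t + (x1 + x2)) + h) ^ 2 - (quad_form a (\<mu> * t - (x1 + x2)) + h) ^ 2))
      \<in> code_of_design Bs"
    by (intro code_of_design_diff[OF CHAR_eq_3] code_of_design_add[OF CHAR_eq_3] pair)
  moreover have "2 * polar_form a y (\<mu> * t) = Tr n (c * t)" for t
    using Tr_mult_F3[OF CHAR_eq_3, of 2 n "a * y ^ 3 ^ m * (\<mu> * t)"]
    by (simp add: polar_form_def F3_def scale)
  ultimately show ?thesis
    by (simp add: quad_form_three_shifts[OF assms(2)] y_def)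
qed

lemma mem_code_C_iff:
  "c \<in> code_C m \<longleftrightarrow>
    (\<exists>a b h. a ^ 3 ^ m = a \<and> h \<in> F3 \<and> c = (\<lambda>t. quad_form a t + Tr n (b * t) + h))"
  unfolding code_C_def subfield_m_def quad_form_def n_eq[symmetric]
  by (auto simp: Tr_add[OF CHAR_eq_3])

lemma code_C_values_F3:
  assumes "(c :: 'a \<Rightarrow> 'a) \<in> code_C m"
  shows "c t \<in> F3"
proof -
  obtain a b h where "h \<in> F3" and "c = (\<lambda>t. quad_form a t + Tr n (b * t) + h)"
    using assms by (auto simp: mem_code_C_iff)
  then show ?thesis
    by (simp add: F3_add[OF CHAR_eq_3] quad_form_in_F3 Tr_in_F3[OF CHAR_eq_3 power_card_eq_self])
qed

lemma Tr_in_code_C: "(\<lambda>t::'a. Tr n t) \<in> code_C m"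
  unfolding mem_code_C_iff
  by (intro exI[of _ 0] exI[of _ 1]) (simp add: quad_form_def F3_def)

lemma code_C_affine:
  assumes "(c :: 'a \<Rightarrow> 'a) \<in> code_C m" and "\<mu> \<noteq> 0"
  shows "(\<lambda>t. c (\<mu> * t + x)) \<in> code_C m"
proof -
  obtain a b h where a: "a ^ 3 ^ m = a" and h: "h \<in> F3"
    and c: "c = (\<lambda>t. quad_form a t + Tr n (b * t) + h)"
    using assms(1) by (auto simp: mem_code_C_iff)
  define a' where "a' = a * \<mu> ^ (3 ^ m + 1)"
  define b' where "b' = b * \<mu> + 2 * a * x ^ 3 ^ m * \<mu>"
  define h' where "h' = quad_form a x + Tr n (b * x) + h"
  have "a' ^ 3 ^ m = a'"
    using a by (simp add: a'_def power_add power_mult_distrib frobenius_m_twice mult_ac)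
  moreover have "h' \<in> F3"
    unfolding h'_def using h
    by (intro F3_add[OF CHAR_eq_3] quad_form_in_F3 Tr_in_F3[OF CHAR_eq_3 power_card_eq_self])
  moreover have "c (\<mu> * t + x) = quad_form a' t + Tr n (b' * t) + h'" for t
  proof -
    have "quad_form a (\<mu> * t) = quad_form a' t"
      by (simp add: quad_form_def a'_def power_mult_distrib mult_ac)
    then have quad: "quad_form a (\<mu> * t + x)
        = quad_form a' t + 2 * polar_form a x (\<mu> * t) + quad_form a x"
      using quad_form_add[OF a, of "\<mu> * t" x] by simp
    have "b' * t = b * (\<mu> * t) + 2 * (a * x ^ 3 ^ m * (\<mu> * t))"
      by (simp add: b'_def algebra_simps)
    then have linear: "Tr n (b' * t) = Tr n (b * (\<mu> * t)) + 2 * polar_form a x (\<mu> * t)"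
      by (simp add: polar_form_def Tr_add[OF CHAR_eq_3] Tr_mult_F3[OF CHAR_eq_3] F3_def)
    show ?thesis
      unfolding c h'_def distrib_left Tr_add[OF CHAR_eq_3] quad linear by (simp add: algebra_simps)
  qed
  ultimately show ?thesis
    unfolding mem_code_C_iff by blast
qed

lemma affine_squares_in_design:
  assumes "(c :: 'a \<Rightarrow> 'a) \<in> code_C m" and "hweight c = d" and "\<mu> \<noteq> 0"
  shows "(\<lambda>t. c (\<mu> * t + x) ^ 2) \<in> code_of_design (blocks_D (code_C m) d)"
proof -
  let ?c = "\<lambda>t. c (\<mu> * t + x)"
  have "?c \<in> code_C m"
    by (rule code_C_affine[OF assms(1,3)])
  moreover have "hweight ?c = d"
    using hweight_affine[OF assms(3), of c x] assms(2) by simp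
  ultimately have "supp ?c \<in> blocks_D (code_C m) d"
    unfolding blocks_D_def by blast
  then have "(incidence_vec (supp ?c) :: 'a \<Rightarrow> 'a) \<in> code_of_design (blocks_D (code_C m) d)"
    by (rule incidence_vec_in_code_of_design[OF CHAR_eq_3])
  moreover have "incidence_vec (supp ?c) = (\<lambda>t. ?c t ^ 2)"
    by (rule incidence_vec_supp_eq_square[OF CHAR_eq_3 code_C_values_F3[OF \<open>?c \<in> code_C m\<close>]])
  ultimately show ?thesis
    by simp
qed

lemma quad_form_complete_square:
  assumes "a \<noteq> 0" and "a ^ 3 ^ m = a"
  obtains e where "\<And>t. quad_form a (t + e) + Tr n (b * (t + e))
    = quad_form a t + (quad_form a e + Tr n (b * e))"
proof -
  obtain e where "e ^ 3 ^ m = b / a"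
    using frobenius_surj by blast
  then have polar: "polar_form a e t = Tr n (b * t)" for t
    using assms(1) by (simp add: polar_form_def)
  have "quad_form a (t + e) + Tr n (b * (t + e))
      = quad_form a t + (quad_form a e + Tr n (b * e)) + 3 * Tr n (b * t)" for t
    unfolding quad_form_add[OF assms(2)] polar distrib_left Tr_add[OF CHAR_eq_3]
    by (simp add: algebra_simps)
  then show ?thesis
    by (intro that) (simp add: three_eq_zero[OF CHAR_eq_3])
qed

lemma Tr_mult_in_design_of_nonconstant:
  assumes "(c0 :: 'a \<Rightarrow> 'a) \<in> code_C m" and "c0 z \<noteq> c0 w"
    and squares: "\<And>\<mu> x. \<mu> \<noteq> 0 \<Longrightarrow> (\<lambda>t. c0 (\<mu> * t + x) ^ 2) \<in> code_of_design Bs"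
    and "c \<noteq> 0"
  shows "(\<lambda>t. Tr n (c * t)) \<in> code_of_design Bs"
proof -
  obtain a b h where a: "a ^ 3 ^ m = a" and h: "h \<in> F3"
    and c0: "c0 = (\<lambda>t. quad_form a t + Tr n (b * t) + h)"
    using assms(1) by (auto simp: mem_code_C_iff)
  show ?thesis
  proof (cases "a = 0")
    case True
    then have linear: "c0 = (\<lambda>t. Tr n (b * t) + h)"
      by (simp add: c0 quad_form_def)
    then have "b \<noteq> 0"
      using assms(2) by auto
    then show ?thesis
      using squares \<open>c \<noteq> 0\<close> h by (intro Tr_mult_in_design_of_linear_squares) (auto simp: linear)
  next
    case False
    obtain e where e: "\<And>t. quad_form a (t + e) + Tr n (b * (t + e))
        = quad_form a t + (quad_form a e + Tr n (b * e))"
      using quad_form_complete_square[OF False a] by blast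
    have "quad_form a e + Tr n (b * e) + h \<in> F3"
      using h by (intro F3_add[OF CHAR_eq_3] quad_form_in_F3 Tr_in_F3[OF CHAR_eq_3 power_card_eq_self])
    moreover have "(\<lambda>t. (quad_form a (\<mu> * t + x) + (quad_form a e + Tr n (b * e) + h)) ^ 2)
        \<in> code_of_design Bs" if "\<mu> \<noteq> 0" for \<mu> x
      using squares[OF that, of "x + e"] by (simp add: c0 add.assoc[symmetric] e)
    ultimately show ?thesis
      using Tr_mult_in_design_of_quadratic_squares[OF False a _ \<open>c \<noteq> 0\<close>] by blast
  qed
qed

lemma min_weight_codeword_nonconstant:
  obtains c0 :: "'a \<Rightarrow> 'a" and z w
  where "c0 \<in> code_C m" and "hweight c0 = min_weight (code_C m :: ('a \<Rightarrow> 'a) set)"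
    and "c0 z \<noteq> c0 w"
proof -
  obtain y :: 'a where "Tr n y \<noteq> 0"
    using Tr_nonzero by blast
  then have "(\<lambda>t::'a. Tr n t) \<noteq> (\<lambda>_. 0)"
    by (auto simp: fun_eq_iff)
  then obtain c0 :: "'a \<Rightarrow> 'a"
    where c0: "c0 \<in> code_C m" "c0 \<noteq> (\<lambda>_. 0)" "hweight c0 = min_weight (code_C m :: ('a \<Rightarrow> 'a) set)"
    by (rule min_weight_attained[OF Tr_in_code_C])
  have "hweight c0 \<le> hweight (\<lambda>t::'a. Tr n t)"
    using c0(3) min_weight_le[OF Tr_in_code_C \<open>(\<lambda>t::'a. Tr n t) \<noteq> (\<lambda>_. 0)\<close>] by simp
  also have "\<dots> < card (UNIV :: 'a set)"
  proof -
    have "0 \<notin> {t::'a. Tr n t \<noteq> 0}"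
      by simp
    then have "{t::'a. Tr n t \<noteq> 0} \<subset> UNIV"
      by blast
    then show ?thesis
      unfolding hweight_def by (simp add: psubset_card_mono)
  qed
  finally have "{t. c0 t \<noteq> 0} \<noteq> UNIV"
    unfolding hweight_def by auto
  then obtain z where "c0 z = 0"
    by auto
  moreover obtain w where "c0 w \<noteq> 0"
    using c0(2) by auto
  ultimately show ?thesis
    using that c0(1,3) by metis
qed

lemma Tr_mult_in_design_of_code_C:
  "(\<lambda>t. Tr n ((b::'a) * t))
    \<in> code_of_design (blocks_D (code_C m) (min_weight (code_C m :: ('a \<Rightarrow> 'a) set)))"
proof (cases "b = 0")
  case True
  then show ?thesis
    using code_of_design_zero[OF CHAR_eq_3] by simp
next
  case False
  obtain c0 :: "'a \<Rightarrow> 'a" and z w where c0: "c0 \<in> code_C m" "hweight c0 = min_weight (code_C m :: ('a \<Rightarrow> 'a) set)"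
    "c0 z \<noteq> c0 w"
    using min_weight_codeword_nonconstant by blast
  show ?thesis
    using affine_squares_in_design[OF c0(1,2)]
    by (intro Tr_mult_in_design_of_nonconstant[OF c0(1,3) _ False])
qed

end

end

theorem lemma3p6:
  fixes m :: nat and b :: "'a::{field,finite}"
  assumes "m \<ge> 2" and "card (UNIV :: 'a set) = 3 ^ (2 * m)"
  shows "(\<lambda>t::'a. Tr (2 * m) (b * t)) \<in>
           code_of_design (blocks_D (code_C m :: ('a \<Rightarrow> 'a) set) (min_weight (code_C m :: ('a \<Rightarrow> 'a) set)))"
  using Tr_mult_in_design_of_code_C[OF assms(2) refl] .

end
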